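(* Assume the setting and the nsCRAIG recurrence described in the context. Then every $\alpha_k$ produced by the recurrence is strictly positive (so the recurrence can only stop through $\beta_{k+1}=0$), and if $\beta_{k+1}=0$ for some $k$, then the nsCRAIG iterates $(u^{(k)},p^{(k)})$ equal the exact solution $(u_*,p_* )$ of the generalized saddle point system.
   Context: Setting: $M\in\mathbb{R}^{m\times m}$ is nonsymmetric and positive definite ($x^TMx>0$ for all $x\ne0$); $A\in\mathbb{R}^{m\times n}$ ($n\le m$) has full column rank; $C\in\mathbb{R}^{n\times n}$ is symmetric positive semidefinite; $b\in\mathbb{R}^n$ is nonzero; $N\in\mathbb{R}^{n\times n}$ is symmetric positive definite. Write $\|x\|_G=(x^TGx)^{1/2}$ for $G$ positive definite (for nonsymmetric $M$ this is the norm of its symmetric part). The generalized saddle point system is $Mu+Ap=0$, $A^Tu-Cp=b$, with unique solution $(u_*,p_* )$; $S=A^TM^{-1}A+C$. nsCRAIG recurrence (exact arithmetic): Initialization: $\beta_1=\|b\|_{N^{-1}}$, $q_1=N^{-1}b/\beta_1$, $Q_1=[q_1]$, $r_1=q_1$, $w_1=M^{-1}Aq_1$, $s_1=Cr_1$, $\alpha_1=(w_1^TMw_1+r_1^Ts_1)^{1/2}$, $v_1=w_1/\alpha_1$, $t_1=s_1/\alpha_1$, $\chi_1=\beta_1/\alpha_1$. For $k=1,2,\dots$: $\hat g_k=N^{-1}(A^Tv_k+t_k)$, $h_k=Q_k^TN\hat g_k\in\mathbb{R}^k$, $g_k=\hat g_k-Q_kh_k$, $\beta_{k+1}=\|g_k\|_N$;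 if $\beta_{k+1}=0$ the recurrence stops; otherwise $q_{k+1}=g_k/\beta_{k+1}$, $Q_{k+1}=[Q_k,q_{k+1}]$, $w_{k+1}=M^{-1}Aq_{k+1}-\beta_{k+1}v_k$, $r_{k+1}=q_{k+1}-(\beta_{k+1}/\alpha_k)r_k$, $s_{k+1}=Cr_{k+1}$, $\alpha_{k+1}=(w_{k+1}^TMw_{k+1}+r_{k+1}^Ts_{k+1})^{1/2}$, $v_{k+1}=w_{k+1}/\alpha_{k+1}$, $t_{k+1}=s_{k+1}/\alpha_{k+1}$, $\chi_{k+1}=-(\beta_{k+1}/\alpha_{k+1})\chi_k$. Matrices: $B_k\in\mathbb{R}^{k\times k}$ upper bidiagonal with $(B_k)_{ii}=\alpha_i$, $(B_k)_{i,i+1}=\beta_{i+1}$; $H_k\in\mathbb{R}^{k\times k}$ upper Hessenberg whose $j$-th column has entries $(H_k)_{ij}=(h_j)_i$ for $i\le j$, $(H_k)_{j+1,j}=\beta_{j+1}$ (if $j<k$), and zeros otherwise. The nsCRAIG iterates at step $k$ are $y_k=-B_k^{-1}H_k^{-1}(\beta_1e_1)$, $p^{(k)}=Q_ky_k$, $u^{(k)}=-M^{-1}Ap^{(k)}$, with $e_1$ the first unit vector of $\mathbb{R}^k$. *)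

theory Defs
  imports "Jordan_Normal_Form.Matrix" "Jordan_Normal_Form.DL_Rank"
begin

definition minv :: "real mat \<Rightarrow> real mat" where
  "minv X = (SOME Y. inverts_mat X Y \<and> inverts_mat Y X)"

definition Gnorm :: "real mat \<Rightarrow> real vec \<Rightarrow> real" where
  "Gnorm G x = sqrt (x \<bullet> (G *\<^sub>v x))"

definition pos_def_mat :: "nat \<Rightarrow> real mat \<Rightarrow> bool" where
  "pos_def_mat d G \<longleftrightarrow> G \<in> carrier_mat d d \<and>
     (\<forall>x \<in> carrier_vec d. x \<noteq> 0\<^sub>v d \<longrightarrow> x \<bullet> (G *\<^sub>v x) > 0)"

definition psd_mat :: "nat \<Rightarrow> real mat \<Rightarrow> bool" where
  "psd_mat d G \<longleftrightarrow> G \<in> carrier_mat d d \<and> (\<forall>x \<in> carrier_vec d. x \<bullet> (G *\<^sub>v x) \<ge> 0)"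

text \<open>State of the nsCRAIG recurrence after step k: the list [q_1,...,q_k] and
  r_k, v_k, t_k, alpha_k, chi_k.\<close>
record cstate =
  qs :: "real vec list"
  rr :: "real vec"
  vv :: "real vec"
  tt :: "real vec"
  al :: real
  ch :: real

definition cr_init :: "real mat \<Rightarrow> real mat \<Rightarrow> real mat \<Rightarrow> real mat \<Rightarrow> real vec \<Rightarrow> cstate" where
  "cr_init M A C N b =
    (let beta1 = Gnorm (minv N) b;
         q1 = (1 / beta1) \<cdot>\<^sub>v (minv N *\<^sub>v b);
         r1 = q1;
         w1 = minv M *\<^sub>v (A *\<^sub>v q1);
         s1 = C *\<^sub>v r1;
         alpha1 = sqrt (w1 \<bullet> (M *\<^sub>v w1) + r1 \<bullet> s1)
     in \<lparr> qs = [q1], rr = r1, vv = (1 / alpha1) \<cdot>\<^sub>v w1, tt = (1 / alpha1) \<cdot>\<^sub>v s1,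
          al = alpha1, ch = beta1 / alpha1 \<rparr>)"

definition Qmat :: "real mat \<Rightarrow> cstate \<Rightarrow> real mat" where
  "Qmat A S = mat_of_cols (dim_col A) (qs S)"

definition cr_ghat :: "real mat \<Rightarrow> real mat \<Rightarrow> cstate \<Rightarrow> real vec" where
  "cr_ghat A N S = minv N *\<^sub>v (transpose_mat A *\<^sub>v vv S + tt S)"

definition cr_h :: "real mat \<Rightarrow> real mat \<Rightarrow> cstate \<Rightarrow> real vec" where
  "cr_h A N S = transpose_mat (Qmat A S) *\<^sub>v (N *\<^sub>v cr_ghat A N S)"

definition cr_g :: "real mat \<Rightarrow> real mat \<Rightarrow> cstate \<Rightarrow> real vec" where
  "cr_g A N S = cr_ghat A N S - Qmat A S *\<^sub>v cr_h A N S"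

definition cr_beta_next :: "real mat \<Rightarrow> real mat \<Rightarrow> cstate \<Rightarrow> real" where
  "cr_beta_next A N S = Gnorm N (cr_g A N S)"

definition cr_next :: "real mat \<Rightarrow> real mat \<Rightarrow> real mat \<Rightarrow> real mat \<Rightarrow> cstate \<Rightarrow> cstate" where
  "cr_next M A C N S =
    (let beta' = cr_beta_next A N S;
         q' = (1 / beta') \<cdot>\<^sub>v cr_g A N S;
         w' = minv M *\<^sub>v (A *\<^sub>v q') - beta' \<cdot>\<^sub>v vv S;
         r' = q' - (beta' / al S) \<cdot>\<^sub>v rr S;
         s' = C *\<^sub>v r';
         alpha' = sqrt (w' \<bullet> (M *\<^sub>v w') + r' \<bullet> s')
     in \<lparr> qs = qs S @ [q'], rr = r', vv = (1 / alpha') \<cdot>\<^sub>v w', tt = (1 / alpha') \<cdot>\<^sub>v s',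
          al = alpha', ch = - (beta' / alpha') * ch S \<rparr>)"

text \<open>cr_state ... j is the state after step j+1 (steps are numbered from 1).\<close>
primrec cr_state :: "real mat \<Rightarrow> real mat \<Rightarrow> real mat \<Rightarrow> real mat \<Rightarrow> real vec \<Rightarrow> nat \<Rightarrow> cstate" where
  "cr_state M A C N b 0 = cr_init M A C N b"
| "cr_state M A C N b (Suc j) = cr_next M A C N (cr_state M A C N b j)"

definition cr_alpha :: "real mat \<Rightarrow> real mat \<Rightarrow> real mat \<Rightarrow> real mat \<Rightarrow> real vec \<Rightarrow> nat \<Rightarrow> real" where
  "cr_alpha M A C N b k = al (cr_state M A C N b (k - 1))"

fun cr_beta :: "real mat \<Rightarrow> real mat \<Rightarrow> real mat \<Rightarrow> real mat \<Rightarrow> real vec \<Rightarrow> nat \<Rightarrow> real" where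
  "cr_beta M A C N b 0 = 0"
| "cr_beta M A C N b (Suc 0) = Gnorm (minv N) b"
| "cr_beta M A C N b (Suc (Suc k)) = cr_beta_next A N (cr_state M A C N b k)"

definition cr_hk :: "real mat \<Rightarrow> real mat \<Rightarrow> real mat \<Rightarrow> real mat \<Rightarrow> real vec \<Rightarrow> nat \<Rightarrow> real vec" where
  "cr_hk M A C N b k = cr_h A N (cr_state M A C N b (k - 1))"

definition cr_B :: "real mat \<Rightarrow> real mat \<Rightarrow> real mat \<Rightarrow> real mat \<Rightarrow> real vec \<Rightarrow> nat \<Rightarrow> real mat" where
  "cr_B M A C N b k = mat k k (\<lambda>(i, j).
      if i = j then cr_alpha M A C N b (i + 1)
      else if j = i + 1 then cr_beta M A C N b (j + 1)
      else 0)"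

text \<open>H_k (upper Hessenberg), 0-based indices: column j holds h_{j+1} on and above the
  diagonal and beta_{j+2} just below it.\<close>
definition cr_H :: "real mat \<Rightarrow> real mat \<Rightarrow> real mat \<Rightarrow> real mat \<Rightarrow> real vec \<Rightarrow> nat \<Rightarrow> real mat" where
  "cr_H M A C N b k = mat k k (\<lambda>(i, j).
      if i \<le> j then cr_hk M A C N b (j + 1) $ i
      else if i = j + 1 then cr_beta M A C N b (j + 2)
      else 0)"

definition cr_y :: "real mat \<Rightarrow> real mat \<Rightarrow> real mat \<Rightarrow> real mat \<Rightarrow> real vec \<Rightarrow> nat \<Rightarrow> real vec" where
  "cr_y M A C N b k = - (minv (cr_B M A C N b k) *\<^sub>v
       (minv (cr_H M A C N b k) *\<^sub>v (cr_beta M A C N b 1 \<cdot>\<^sub>v unit_vec k 0)))"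

definition cr_p :: "real mat \<Rightarrow> real mat \<Rightarrow> real mat \<Rightarrow> real mat \<Rightarrow> real vec \<Rightarrow> nat \<Rightarrow> real vec" where
  "cr_p M A C N b k = Qmat A (cr_state M A C N b (k - 1)) *\<^sub>v cr_y M A C N b k"

definition cr_u :: "real mat \<Rightarrow> real mat \<Rightarrow> real mat \<Rightarrow> real mat \<Rightarrow> real vec \<Rightarrow> nat \<Rightarrow> real vec" where
  "cr_u M A C N b k = - (minv M *\<^sub>v (A *\<^sub>v cr_p M A C N b k))"

end

theory Submission
  imports Defs
begin

text \<open>
  Along the recurrence, \<open>q\<^sub>1, \<dots>, q\<^sub>k\<close> are \<open>N\<close>-orthonormal and \<open>r\<^sub>k\<close> lies in their span with
  \<open>r\<^sub>k \<bullet> N q\<^sub>k = 1\<close>, so \<open>r\<^sub>k \<noteq> 0\<close>; as \<open>A\<close> has full column rank, \<open>w\<^sub>k = M\<^sup>-\<^sup>1 A r\<^sub>k \<noteq> 0\<close> and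
  \<open>\<alpha>\<^sub>k\<^sup>2 = w\<^sub>k \<bullet> M w\<^sub>k + r\<^sub>k \<bullet> C r\<^sub>k > 0\<close>.
  Unwinding the recurrences for \<open>w\<close>, \<open>s\<close> and \<open>g\<close> gives \<open>M\<^sup>-\<^sup>1 A Q\<^sub>k = V\<^sub>k B\<^sub>k\<close>, \<open>C Q\<^sub>k = T\<^sub>k B\<^sub>k\<close>
  and, once \<open>\<beta>\<^sub>k\<^sub>+\<^sub>1 = 0\<close>, \<open>N Q\<^sub>k H\<^sub>k = A\<^sup>T V\<^sub>k + T\<^sub>k\<close>, where \<open>V\<^sub>k\<close> and \<open>T\<^sub>k\<close> have the columns
  \<open>v\<^sub>i\<close> and \<open>t\<^sub>i\<close>. Hence \<open>S Q\<^sub>k = N Q\<^sub>k H\<^sub>k B\<^sub>k\<close> for the Schur complement \<open>S = A\<^sup>T M\<^sup>-\<^sup>1 A + C\<close>,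
  which is positive definite. This forces \<open>H\<^sub>k\<close> to be invertible, and
  \<open>S p\<^sup>(\<^sup>k\<^sup>) = - N Q\<^sub>k \<beta>\<^sub>1 e\<^sub>1 = - b = S p\<^sub>*\<close>, so \<open>p\<^sup>(\<^sup>k\<^sup>) = p\<^sub>*\<close> and
  \<open>u\<^sup>(\<^sup>k\<^sup>) = - M\<^sup>-\<^sup>1 A p\<^sub>* = u\<^sub>*\<close>.
\<close>

text \<open>\<open>col_mult\<close> would expand columns of products entrywise, preempting \<open>col_mult2\<close>.\<close>
declare col_mult [simp del]

lemma smult_inverse_cancel:
  fixes w :: "real vec"
  assumes "\<alpha> \<noteq> 0"
  shows "\<alpha> \<cdot>\<^sub>v ((1 / \<alpha>) \<cdot>\<^sub>v w) = w"
  using assms by (simp add: smult_smult_assoc)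

lemma mult_mat_vec_zero [simp]:
  fixes X :: "'a :: comm_ring mat"
  assumes "X \<in> carrier_mat nr nc"
  shows "X *\<^sub>v 0\<^sub>v nc = 0\<^sub>v nr"
  using assms by (intro eq_vecI) auto

lemma mult_mat_vec_uminus:
  fixes X :: "'a :: comm_ring mat"
  assumes "X \<in> carrier_mat nr nc" "v \<in> carrier_vec nc"
  shows "X *\<^sub>v (- v) = - (X *\<^sub>v v)"
  using assms by (intro eq_vecI) auto

lemma mult_mat_vec_unit_vec:
  fixes X :: "'a :: comm_ring_1 mat"
  assumes "X \<in> carrier_mat nr nc" "i < nc"
  shows "X *\<^sub>v unit_vec nc i = col X i"
  using assms by (intro eq_vecI) auto

lemma scalar_prod_sym_mat:
  fixes X :: "'a :: comm_ring mat"
  assumes X: "X \<in> carrier_mat d d" "transpose_mat X = X"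
    and x: "x \<in> carrier_vec d" and y: "y \<in> carrier_vec d"
  shows "x \<bullet> (X *\<^sub>v y) = y \<bullet> (X *\<^sub>v x)"
proof -
  have "x \<bullet> (X *\<^sub>v y) = (transpose_mat X *\<^sub>v x) \<bullet> y"
    using transpose_vec_mult_scalar[OF X(1) y x] by simp
  also have "\<dots> = y \<bullet> (X *\<^sub>v x)"
    using X x y by (simp add: comm_scalar_prod[of _ d])
  finally show ?thesis .
qed

lemma mat_of_cols_take_mult_vec:
  fixes ws :: "'a :: comm_ring vec list"
  assumes ws: "set ws \<subseteq> carrier_vec d" and l: "l \<le> length ws" and x: "x \<in> carrier_vec l"
  shows "mat_of_cols d ws *\<^sub>v vec (length ws) (\<lambda>i. if i < l then x $ i else 0)
       = mat_of_cols d (take l ws) *\<^sub>v x"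
proof (rule eq_vecI)
  fix r assume "r < dim_vec (mat_of_cols d (take l ws) *\<^sub>v x)"
  hence r: "r < d" by simp
  have "(\<Sum>i = 0..<length ws. mat_of_cols d ws $$ (r, i) * (if i < l then x $ i else 0))
      = (\<Sum>i = 0..<l. mat_of_cols d (take l ws) $$ (r, i) * x $ i)"
    using l r by (intro sum.mono_neutral_cong_right) (auto simp: mat_of_cols_index)
  thus "(mat_of_cols d ws *\<^sub>v vec (length ws) (\<lambda>i. if i < l then x $ i else 0)) $ r
      = (mat_of_cols d (take l ws) *\<^sub>v x) $ r"
    using r x l by (simp add: scalar_prod_def min_absorb2)
qed simp

lemma mat_of_cols_map_upt_carrier: "mat_of_cols d (map f [0..<k]) \<in> carrier_mat d k"
  using mat_of_cols_carrier(1)[of d "map f [0..<k]"] by simp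

lemma col_mat_of_cols_map_upt:
  "i < k \<Longrightarrow> f i \<in> carrier_vec d \<Longrightarrow> col (mat_of_cols d (map f [0..<k])) i = f i"
  by simp

lemma minv_inverse:
  fixes X :: "real mat"
  assumes X: "X \<in> carrier_mat d d" and detX: "det X \<noteq> 0"
  shows "minv X \<in> carrier_mat d d" "X * minv X = 1\<^sub>m d" "minv X * X = 1\<^sub>m d"
proof -
  from det_non_zero_imp_unit[OF X detX, of undefined]
  obtain Y where Y: "Y \<in> carrier_mat d d" "Y * X = 1\<^sub>m d" "X * Y = 1\<^sub>m d"
    unfolding Units_def ring_mat_def by auto
  hence "\<exists>Y. inverts_mat X Y \<and> inverts_mat Y X"
    using X unfolding inverts_mat_def by auto
  hence "inverts_mat X (minv X) \<and> inverts_mat (minv X) X"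
    unfolding minv_def by (rule someI_ex)
  hence XZ: "X * minv X = 1\<^sub>m d" and ZX: "minv X * X = 1\<^sub>m (dim_row (minv X))"
    using X unfolding inverts_mat_def by auto
  have "dim_col (minv X) = d" using arg_cong[OF XZ, of dim_col] by simp
  moreover have "dim_row (minv X) = d" using arg_cong[OF ZX, of dim_col] X by simp
  ultimately show "minv X \<in> carrier_mat d d" by auto
  show "X * minv X = 1\<^sub>m d" by (fact XZ)
  show "minv X * X = 1\<^sub>m d" using ZX \<open>dim_row (minv X) = d\<close> by simp
qed

lemma minv_mult_mat_vec_cancel:
  fixes X :: "real mat"
  assumes X: "X \<in> carrier_mat d d" and detX: "det X \<noteq> 0" and v: "v \<in> carrier_vec d"
  shows "minv X *\<^sub>v (X *\<^sub>v v) = v" "X *\<^sub>v (minv X *\<^sub>v v) = v"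
proof -
  note inv = minv_inverse[OF X detX]
  have "minv X *\<^sub>v (X *\<^sub>v v) = (minv X * X) *\<^sub>v v" using inv(1) X v by simp
  thus "minv X *\<^sub>v (X *\<^sub>v v) = v" using inv(3) v by simp
  have "X *\<^sub>v (minv X *\<^sub>v v) = (X * minv X) *\<^sub>v v" using inv(1) X v by simp
  thus "X *\<^sub>v (minv X *\<^sub>v v) = v" using inv(2) v by simp
qed

lemma pos_def_mat_mult_vec_eq_zero:
  assumes "pos_def_mat d G" "x \<in> carrier_vec d" "G *\<^sub>v x = 0\<^sub>v d"
  shows "x = 0\<^sub>v d"
  using assms unfolding pos_def_mat_def by (metis less_irrefl scalar_prod_right_zero)

lemma pos_def_mat_mult_vec_inj:
  assumes G: "pos_def_mat d G" and x: "x \<in> carrier_vec d" and y: "y \<in> carrier_vec d"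
    and eq: "G *\<^sub>v x = G *\<^sub>v y"
  shows "x = y"
proof -
  have "G \<in> carrier_mat d d" using G unfolding pos_def_mat_def by simp
  hence "G *\<^sub>v (x - y) = 0\<^sub>v d" using mult_minus_distrib_mat_vec[of G d d x y] eq x y by simp
  hence diff: "x - y = 0\<^sub>v d" using pos_def_mat_mult_vec_eq_zero[OF G] x y by simp
  show ?thesis
  proof (rule eq_vecI)
    fix i assume "i < dim_vec y"
    thus "x $ i = y $ i" using arg_cong[OF diff, of "\<lambda>v. v $ i"] x y by simp
  qed (use x y in simp)
qed

lemma pos_def_mat_det_nonzero:
  assumes G: "pos_def_mat d G"
  shows "det G \<noteq> 0"
proof
  assume "det G = 0"
  moreover have "G \<in> carrier_mat d d" using G unfolding pos_def_mat_def by simp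
  ultimately obtain x where "x \<in> carrier_vec d" "x \<noteq> 0\<^sub>v d" "G *\<^sub>v x = 0\<^sub>v d"
    using det_0_iff_vec_prod_zero by blast
  thus False using pos_def_mat_mult_vec_eq_zero[OF G] by blast
qed

lemma (in vec_space) non_distinct_cols_rank_less:
  assumes A: "A \<in> carrier_mat n nc" and nd: "\<not> distinct (cols A)"
  shows "rank A < nc"
proof -
  obtain S where S: "maximal S (\<lambda>T. T \<subseteq> set (cols A) \<and> lin_indpt T)"
    using maximal_exists[of "(\<lambda>T. T \<subseteq> set (cols A) \<and> lin_indpt T)" "card (set (cols A))" "{}"]
    by (meson List.finite_set card_mono empty_iff empty_subsetI finite_lin_indpt2 rev_finite_subset)
  then have "card S \<le> card (set (cols A))" by (simp add: card_mono maximal_def)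
  also have "\<dots> < nc"
    using A nd card_distinct card_length cols_length carrier_matD(2) nat_less_le by metis
  finally show ?thesis using rank_card_indpt[OF A S] by simp
qed

lemma (in vec_space) full_col_rank_mult_vec_eq_zero:
  assumes A: "A \<in> carrier_mat n nc" and rk: "rank A = nc"
    and v: "v \<in> carrier_vec nc" and Av: "A *\<^sub>v v = 0\<^sub>v n"
  shows "v = 0\<^sub>v nc"
proof (rule ccontr)
  assume v0: "v \<noteq> 0\<^sub>v nc"
  have d: "distinct (cols A)" using non_distinct_cols_rank_less[OF A] rk by force
  have "lin_indpt (set (cols A))" using full_rank_lin_indpt[OF A rk d] .
  moreover have "lin_dep (set (cols A))" using lin_depI[OF A v v0 Av d] .
  ultimately show False by simp
qed

definition schur_mat :: "real mat \<Rightarrow> real mat \<Rightarrow> real mat \<Rightarrow> real mat" where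
  "schur_mat M A C = transpose_mat A * minv M * A + C"

lemma minv_pos_def:
  assumes M: "pos_def_mat m M"
  shows "minv M \<in> carrier_mat m m"
    "v \<in> carrier_vec m \<Longrightarrow> minv M *\<^sub>v (M *\<^sub>v v) = v"
    "v \<in> carrier_vec m \<Longrightarrow> M *\<^sub>v (minv M *\<^sub>v v) = v"
proof -
  have Mc: "M \<in> carrier_mat m m" using M unfolding pos_def_mat_def by simp
  note detM = pos_def_mat_det_nonzero[OF M]
  show "minv M \<in> carrier_mat m m" using minv_inverse(1)[OF Mc detM] .
  show "v \<in> carrier_vec m \<Longrightarrow> minv M *\<^sub>v (M *\<^sub>v v) = v"
    "v \<in> carrier_vec m \<Longrightarrow> M *\<^sub>v (minv M *\<^sub>v v) = v"
    using minv_mult_mat_vec_cancel[OF Mc detM] by blast+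
qed

lemma schur_mat_carrier_mult_vec:
  assumes M: "pos_def_mat m M" and A: "A \<in> carrier_mat m n" and C: "C \<in> carrier_mat n n"
  shows "schur_mat M A C \<in> carrier_mat n n"
    "x \<in> carrier_vec n \<Longrightarrow>
       schur_mat M A C *\<^sub>v x = transpose_mat A *\<^sub>v (minv M *\<^sub>v (A *\<^sub>v x)) + C *\<^sub>v x"
proof -
  have AT: "transpose_mat A \<in> carrier_mat n m" using A by simp
  have Mi: "minv M \<in> carrier_mat m m" using minv_pos_def(1)[OF M] .
  show "schur_mat M A C \<in> carrier_mat n n" unfolding schur_mat_def using AT Mi A C by simp
  assume x: "x \<in> carrier_vec n"
  have "schur_mat M A C *\<^sub>v x = (transpose_mat A * minv M * A) *\<^sub>v x + C *\<^sub>v x"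
    unfolding schur_mat_def using AT Mi A C x by (intro add_mult_distrib_mat_vec) auto
  also have "(transpose_mat A * minv M * A) *\<^sub>v x = (transpose_mat A * minv M) *\<^sub>v (A *\<^sub>v x)"
    using AT Mi A x by (intro assoc_mult_mat_vec) auto
  also have "\<dots> = transpose_mat A *\<^sub>v (minv M *\<^sub>v (A *\<^sub>v x))"
    using AT Mi A x by (intro assoc_mult_mat_vec) auto
  finally show "schur_mat M A C *\<^sub>v x = transpose_mat A *\<^sub>v (minv M *\<^sub>v (A *\<^sub>v x)) + C *\<^sub>v x" .
qed

lemma schur_mat_pos_def:
  assumes M: "pos_def_mat m M" and A: "A \<in> carrier_mat m n"
    and rk: "vec_space.rank m A = n" and C: "psd_mat n C"
  shows "pos_def_mat n (schur_mat M A C)"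
  unfolding pos_def_mat_def
proof (intro conjI ballI impI)
  have Cc: "C \<in> carrier_mat n n" using C unfolding psd_mat_def by simp
  note S = schur_mat_carrier_mult_vec[OF M A Cc]
  show "schur_mat M A C \<in> carrier_mat n n" by (fact S(1))
  fix x :: "real vec" assume x: "x \<in> carrier_vec n" and x0: "x \<noteq> 0\<^sub>v n"
  define w where "w = minv M *\<^sub>v (A *\<^sub>v x)"
  have Ax: "A *\<^sub>v x \<in> carrier_vec m" using A x by simp
  have wc: "w \<in> carrier_vec m" unfolding w_def using minv_pos_def(1)[OF M] Ax by simp
  have Mw: "M *\<^sub>v w = A *\<^sub>v x" unfolding w_def using minv_pos_def(3)[OF M Ax] .
  have "A *\<^sub>v x \<noteq> 0\<^sub>v m"
    using vec_space.full_col_rank_mult_vec_eq_zero[OF A rk x] x0 by blast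
  hence "w \<noteq> 0\<^sub>v m" using Mw M unfolding pos_def_mat_def by auto
  hence "w \<bullet> (M *\<^sub>v w) > 0" using M wc unfolding pos_def_mat_def by blast
  moreover have "x \<bullet> (C *\<^sub>v x) \<ge> 0" using C x unfolding psd_mat_def by blast
  moreover have "x \<bullet> (transpose_mat A *\<^sub>v w) = w \<bullet> (M *\<^sub>v w)"
    using transpose_vec_mult_scalar[OF A x wc] comm_scalar_prod[OF x, of "transpose_mat A *\<^sub>v w"]
      A wc Mw by simp
  moreover have "x \<bullet> (schur_mat M A C *\<^sub>v x) = x \<bullet> (transpose_mat A *\<^sub>v w) + x \<bullet> (C *\<^sub>v x)"
    unfolding S(2)[OF x] w_def[symmetric]
    using A Cc wc x by (intro scalar_prod_add_distrib) auto
  ultimately show "x \<bullet> (schur_mat M A C *\<^sub>v x) > 0" by simp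
qed

lemma saddle_point_solution:
  assumes M: "pos_def_mat m M" and A: "A \<in> carrier_mat m n" and C: "C \<in> carrier_mat n n"
    and us: "u_star \<in> carrier_vec m" and ps: "p_star \<in> carrier_vec n"
    and eq1: "M *\<^sub>v u_star + A *\<^sub>v p_star = 0\<^sub>v m"
    and eq2: "transpose_mat A *\<^sub>v u_star - C *\<^sub>v p_star = b"
  shows "u_star = - (minv M *\<^sub>v (A *\<^sub>v p_star))" "schur_mat M A C *\<^sub>v p_star = - b"
proof -
  have Mc: "M \<in> carrier_mat m m" using M unfolding pos_def_mat_def by simp
  have Aps: "A *\<^sub>v p_star \<in> carrier_vec m" using A ps by simp
  have "M *\<^sub>v u_star = - (A *\<^sub>v p_star)"
  proof (rule eq_vecI)
    fix i assume "i < dim_vec (- (A *\<^sub>v p_star))"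
    hence "i < m" using A by simp
    thus "(M *\<^sub>v u_star) $ i = (- (A *\<^sub>v p_star)) $ i"
      using arg_cong[OF eq1, of "\<lambda>v. v $ i"] Mc A us ps by (simp add: eq_neg_iff_add_eq_0)
  qed (use Mc A in simp)
  hence "minv M *\<^sub>v (M *\<^sub>v u_star) = - (minv M *\<^sub>v (A *\<^sub>v p_star))"
    using mult_mat_vec_uminus[OF minv_pos_def(1)[OF M] Aps] by simp
  thus u: "u_star = - (minv M *\<^sub>v (A *\<^sub>v p_star))" using minv_pos_def(2)[OF M us] by simp
  have w: "minv M *\<^sub>v (A *\<^sub>v p_star) \<in> carrier_vec m" using minv_pos_def(1)[OF M] Aps by simp
  have "- (transpose_mat A *\<^sub>v (minv M *\<^sub>v (A *\<^sub>v p_star))) - C *\<^sub>v p_star = b"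
    using eq2 A w unfolding u by (simp add: mult_mat_vec_uminus[of _ n m])
  thus "schur_mat M A C *\<^sub>v p_star = - b"
    unfolding schur_mat_carrier_mult_vec(2)[OF M A C ps]
    using A C w ps by (auto intro!: eq_vecI)
qed

text \<open>Only \<open>B\<close> is assumed invertible; the factorisation forces \<open>H\<close> to be invertible as well.\<close>

lemma projected_system_solution:
  fixes S N Q H B :: "real mat"
  assumes S: "S \<in> carrier_mat n n"
    and S_inj: "\<And>x. x \<in> carrier_vec n \<Longrightarrow> S *\<^sub>v x = 0\<^sub>v n \<Longrightarrow> x = 0\<^sub>v n"
    and N: "N \<in> carrier_mat n n" and Q: "Q \<in> carrier_mat n k"
    and orth: "transpose_mat Q * (N * Q) = 1\<^sub>m k"
    and H: "H \<in> carrier_mat k k" and B: "B \<in> carrier_mat k k" and detB: "det B \<noteq> 0"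
    and SQ: "S * Q = N * Q * H * B"
    and c: "c \<in> carrier_vec k"
  shows "S *\<^sub>v (Q *\<^sub>v (- (minv B *\<^sub>v (minv H *\<^sub>v c)))) = - (N *\<^sub>v (Q *\<^sub>v c))"
proof -
  have fact_vec: "S *\<^sub>v (Q *\<^sub>v z) = N *\<^sub>v (Q *\<^sub>v (H *\<^sub>v (B *\<^sub>v z)))" if z: "z \<in> carrier_vec k" for z
  proof -
    have "S *\<^sub>v (Q *\<^sub>v z) = (N * Q * H * B) *\<^sub>v z"
      using S Q z by (simp flip: SQ)
    also have "\<dots> = (N * Q * H) *\<^sub>v (B *\<^sub>v z)"
      using N Q H B z by (intro assoc_mult_mat_vec) auto
    also have "\<dots> = (N * Q) *\<^sub>v (H *\<^sub>v (B *\<^sub>v z))"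
      using N Q H B z by (intro assoc_mult_mat_vec) auto
    also have "\<dots> = N *\<^sub>v (Q *\<^sub>v (H *\<^sub>v (B *\<^sub>v z)))"
      using N Q H B z by (intro assoc_mult_mat_vec) auto
    finally show ?thesis .
  qed
  note B_inv = minv_mult_mat_vec_cancel[OF B detB] minv_inverse(1)[OF B detB]
  have detH: "det H \<noteq> 0"
  proof
    assume "det H = 0"
    then obtain x where x: "x \<in> carrier_vec k" "x \<noteq> 0\<^sub>v k" and Hx: "H *\<^sub>v x = 0\<^sub>v k"
      using det_0_iff_vec_prod_zero[OF H] by blast
    define z where "z = minv B *\<^sub>v x"
    have z: "z \<in> carrier_vec k" unfolding z_def using B_inv(3) x by simp
    have Bz: "B *\<^sub>v z = x" unfolding z_def using B_inv(2)[OF x(1)] .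
    have "S *\<^sub>v (Q *\<^sub>v z) = 0\<^sub>v n" using fact_vec[OF z] Bz Hx N Q by simp
    hence Qz: "Q *\<^sub>v z = 0\<^sub>v n" using S_inj Q z by simp
    have "z = (transpose_mat Q * (N * Q)) *\<^sub>v z" using orth z by simp
    also have "\<dots> = transpose_mat Q *\<^sub>v (N *\<^sub>v (Q *\<^sub>v z))"
      using N Q z by (simp add: assoc_mult_mat_vec[of _ k n _ k])
    finally have "z = 0\<^sub>v k" using Qz N Q by simp
    thus False using Bz B x(2) by simp
  qed
  note H_inv = minv_mult_mat_vec_cancel[OF H detH] minv_inverse(1)[OF H detH]
  define y where "y = minv B *\<^sub>v (minv H *\<^sub>v c)"
  have Hc: "minv H *\<^sub>v c \<in> carrier_vec k" using H_inv(3) c by simp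
  have y: "y \<in> carrier_vec k" unfolding y_def using B_inv(3) Hc by simp
  have "H *\<^sub>v (B *\<^sub>v y) = c" unfolding y_def using B_inv(2)[OF Hc] H_inv(2)[OF c] by simp
  hence "S *\<^sub>v (Q *\<^sub>v y) = N *\<^sub>v (Q *\<^sub>v c)" using fact_vec[OF y] by simp
  thus ?thesis
    unfolding y_def[symmetric] using mult_mat_vec_uminus[OF Q y] mult_mat_vec_uminus[OF S] Q y
    by simp
qed

lemma cr_init_fields:
  assumes "\<beta> = Gnorm (minv N) b" "q = (1 / \<beta>) \<cdot>\<^sub>v (minv N *\<^sub>v b)"
    "w = minv M *\<^sub>v (A *\<^sub>v q)" "\<alpha> = sqrt (w \<bullet> (M *\<^sub>v w) + q \<bullet> (C *\<^sub>v q))"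
  shows "qs (cr_init M A C N b) = [q]" "rr (cr_init M A C N b) = q"
    "vv (cr_init M A C N b) = (1 / \<alpha>) \<cdot>\<^sub>v w" "tt (cr_init M A C N b) = (1 / \<alpha>) \<cdot>\<^sub>v (C *\<^sub>v q)"
    "al (cr_init M A C N b) = \<alpha>"
  using assms unfolding cr_init_def Let_def by simp_all

lemma cr_next_fields:
  assumes "\<beta> = cr_beta_next A N S" "q = (1 / \<beta>) \<cdot>\<^sub>v cr_g A N S"
    "r = q - (\<beta> / al S) \<cdot>\<^sub>v rr S" "w = minv M *\<^sub>v (A *\<^sub>v q) - \<beta> \<cdot>\<^sub>v vv S"
    "\<alpha> = sqrt (w \<bullet> (M *\<^sub>v w) + r \<bullet> (C *\<^sub>v r))"
  shows "qs (cr_next M A C N S) = qs S @ [q]" "rr (cr_next M A C N S) = r"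
    "vv (cr_next M A C N S) = (1 / \<alpha>) \<cdot>\<^sub>v w" "tt (cr_next M A C N S) = (1 / \<alpha>) \<cdot>\<^sub>v (C *\<^sub>v r)"
    "al (cr_next M A C N S) = \<alpha>"
  using assms unfolding cr_next_def Let_def by simp_all

lemma cr_beta_nonzero_upto_iff:
  "(\<forall>j. 1 \<le> j \<and> j < Suc K \<longrightarrow> cr_beta M A C N b (j + 1) \<noteq> 0)
     \<longleftrightarrow> (\<forall>i<K. cr_beta_next A N (cr_state M A C N b i) \<noteq> 0)"
proof
  assume nz: "\<forall>j. 1 \<le> j \<and> j < Suc K \<longrightarrow> cr_beta M A C N b (j + 1) \<noteq> 0"
  show "\<forall>i<K. cr_beta_next A N (cr_state M A C N b i) \<noteq> 0"
  proof (intro allI impI)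
    fix i assume "i < K"
    thus "cr_beta_next A N (cr_state M A C N b i) \<noteq> 0" using nz[rule_format, of "Suc i"] by simp
  qed
next
  assume nz: "\<forall>i<K. cr_beta_next A N (cr_state M A C N b i) \<noteq> 0"
  show "\<forall>j. 1 \<le> j \<and> j < Suc K \<longrightarrow> cr_beta M A C N b (j + 1) \<noteq> 0"
  proof (intro allI impI)
    fix j assume "1 \<le> j \<and> j < Suc K"
    then obtain i where "j = Suc i" "i < K" by (cases j) auto
    thus "cr_beta M A C N b (j + 1) \<noteq> 0" using nz by simp
  qed
qed

locale ns_craig =
  fixes m n :: nat and M A C N :: "real mat" and b :: "real vec"
  assumes M_pos_def: "pos_def_mat m M"
    and A_carrier: "A \<in> carrier_mat m n" and A_rank: "vec_space.rank m A = n"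
    and C_psd: "psd_mat n C"
    and N_pos_def: "pos_def_mat n N" and N_sym: "transpose_mat N = N"
    and b_carrier: "b \<in> carrier_vec n" and b_nonzero: "b \<noteq> 0\<^sub>v n"
begin

abbreviation st :: "nat \<Rightarrow> cstate" where
  "st j \<equiv> cr_state M A C N b j"

lemma M_carrier: "M \<in> carrier_mat m m"
  using M_pos_def unfolding pos_def_mat_def by simp

lemma N_carrier: "N \<in> carrier_mat n n"
  using N_pos_def unfolding pos_def_mat_def by simp

lemma C_carrier: "C \<in> carrier_mat n n"
  using C_psd unfolding psd_mat_def by simp

lemmas minv_M = minv_pos_def[OF M_pos_def]
lemmas minv_N = minv_pos_def[OF N_pos_def]

lemma Qmat_eq: "Qmat A S = mat_of_cols n (qs S)"
  unfolding Qmat_def using A_carrier by simp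

lemma N_scalar_prod_nonneg: "x \<in> carrier_vec n \<Longrightarrow> 0 \<le> x \<bullet> (N *\<^sub>v x)"
  using N_pos_def unfolding pos_def_mat_def by (cases "x = 0\<^sub>v n") (auto simp: less_imp_le)

lemma N_scalar_prod_comm: "x \<in> carrier_vec n \<Longrightarrow> y \<in> carrier_vec n \<Longrightarrow> x \<bullet> (N *\<^sub>v y) = y \<bullet> (N *\<^sub>v x)"
  using scalar_prod_sym_mat[OF N_carrier N_sym] by blast

lemma sqrt_energy_pos:
  assumes r: "r \<in> carrier_vec n" "r \<noteq> 0\<^sub>v n" and w: "w = minv M *\<^sub>v (A *\<^sub>v r)"
  shows "0 < sqrt (w \<bullet> (M *\<^sub>v w) + r \<bullet> (C *\<^sub>v r))"
proof -
  have Ar: "A *\<^sub>v r \<in> carrier_vec m" using A_carrier r by simp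
  have wc: "w \<in> carrier_vec m" using w minv_M(1) Ar by simp
  have "A *\<^sub>v r \<noteq> 0\<^sub>v m"
    using vec_space.full_col_rank_mult_vec_eq_zero[OF A_carrier A_rank r(1)] r(2) by blast
  hence "w \<noteq> 0\<^sub>v m" using minv_M(3)[OF Ar] w M_carrier by auto
  hence "0 < w \<bullet> (M *\<^sub>v w)" using M_pos_def wc unfolding pos_def_mat_def by blast
  moreover have "0 \<le> r \<bullet> (C *\<^sub>v r)" using C_psd r unfolding psd_mat_def by blast
  ultimately show ?thesis by simp
qed

definition N_orthonormal :: "real vec list \<Rightarrow> bool" where
  "N_orthonormal ws \<longleftrightarrow> set ws \<subseteq> carrier_vec n \<and>
     (\<forall>a<length ws. \<forall>c<length ws. ws ! a \<bullet> (N *\<^sub>v (ws ! c)) = (if a = c then 1 else 0))"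

text \<open>
  Membership of \<open>r\<close> in the span of \<open>ws\<close>, phrased as \<open>N\<close>-orthogonality to the \<open>N\<close>-orthogonal
  complement of \<open>ws\<close>, which avoids linear combinations.
\<close>
definition in_N_span :: "real vec list \<Rightarrow> real vec \<Rightarrow> bool" where
  "in_N_span ws r \<longleftrightarrow> r \<in> carrier_vec n \<and>
     (\<forall>x\<in>carrier_vec n. (\<forall>a<length ws. ws ! a \<bullet> (N *\<^sub>v x) = 0) \<longrightarrow> r \<bullet> (N *\<^sub>v x) = 0)"

lemma N_orthonormal_snoc:
  assumes orth: "N_orthonormal ws" and q: "q \<in> carrier_vec n" and qNq: "q \<bullet> (N *\<^sub>v q) = 1"
    and perp: "\<forall>a<length ws. ws ! a \<bullet> (N *\<^sub>v q) = 0"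
  shows "N_orthonormal (ws @ [q])"
proof -
  have perp': "q \<bullet> (N *\<^sub>v (ws ! a)) = 0" if "a < length ws" for a
    using N_scalar_prod_comm[OF q, of "ws ! a"] perp orth that
    unfolding N_orthonormal_def by (simp add: subset_code(1))
  show ?thesis
    using orth q qNq perp perp' unfolding N_orthonormal_def by (auto simp: nth_append)
qed

lemma in_N_span_snoc:
  assumes r: "in_N_span ws r" and q: "q \<in> carrier_vec n"
  shows "in_N_span (ws @ [q]) (q - c \<cdot>\<^sub>v r)"
  unfolding in_N_span_def
proof (intro conjI ballI impI)
  have rc: "r \<in> carrier_vec n" using r unfolding in_N_span_def by simp
  show "q - c \<cdot>\<^sub>v r \<in> carrier_vec n" using q rc by simp
  fix x assume x: "x \<in> carrier_vec n" and perp: "\<forall>a<length (ws @ [q]). (ws @ [q]) ! a \<bullet> (N *\<^sub>v x) = 0"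
  have "q \<bullet> (N *\<^sub>v x) = 0" using perp[rule_format, of "length ws"] by simp
  moreover have "\<forall>a<length ws. ws ! a \<bullet> (N *\<^sub>v x) = 0"
  proof (intro allI impI)
    fix a assume "a < length ws"
    thus "ws ! a \<bullet> (N *\<^sub>v x) = 0" using perp[rule_format, of a] by (simp add: nth_append)
  qed
  hence "r \<bullet> (N *\<^sub>v x) = 0" using r x unfolding in_N_span_def by blast
  ultimately show "(q - c \<cdot>\<^sub>v r) \<bullet> (N *\<^sub>v x) = 0"
    using q rc x N_carrier by (simp add: minus_scalar_prod_distrib[of _ n])
qed

lemma Qmat_orthonormal:
  assumes "N_orthonormal (qs S)"
  shows "transpose_mat (Qmat A S) * (N * Qmat A S) = 1\<^sub>m (length (qs S))"
proof -
  have Q: "Qmat A S \<in> carrier_mat n (length (qs S))" unfolding Qmat_eq by simp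
  show ?thesis
  proof (rule eq_matI)
    fix a c assume "a < dim_row (1\<^sub>m (length (qs S)) :: real mat)"
      and "c < dim_col (1\<^sub>m (length (qs S)) :: real mat)"
    hence a: "a < length (qs S)" and c: "c < length (qs S)" by auto
    hence qa: "qs S ! a \<in> carrier_vec n" and qc: "qs S ! c \<in> carrier_vec n"
      using assms unfolding N_orthonormal_def by (meson nth_mem subsetD)+
    have "(transpose_mat (Qmat A S) * (N * Qmat A S)) $$ (a, c)
        = col (Qmat A S) a \<bullet> (N *\<^sub>v col (Qmat A S) c)"
      using Q N_carrier a c by (simp add: index_mult_mat)
    also have "\<dots> = qs S ! a \<bullet> (N *\<^sub>v (qs S ! c))"
      using a c qa qc unfolding Qmat_eq by simp
    finally show "(transpose_mat (Qmat A S) * (N * Qmat A S)) $$ (a, c) = 1\<^sub>m (length (qs S)) $$ (a, c)"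
      using assms a c unfolding N_orthonormal_def by simp
  qed (use Q in auto)
qed

text \<open>
  The last two conjuncts say \<open>w\<^sub>k = M\<^sup>-\<^sup>1 A r\<^sub>k\<close> and \<open>s\<^sub>k = C r\<^sub>k\<close>: the correction
  \<open>- \<beta>\<^sub>k\<^sub>+\<^sub>1 v\<^sub>k\<close> in \<open>w\<^sub>k\<^sub>+\<^sub>1\<close> is the image of the correction in \<open>r\<^sub>k\<^sub>+\<^sub>1\<close>.
\<close>
definition cr_invariant :: "cstate \<Rightarrow> bool" where
  "cr_invariant S \<longleftrightarrow> N_orthonormal (qs S) \<and> in_N_span (qs S) (rr S) \<and>
     vv S \<in> carrier_vec m \<and> tt S \<in> carrier_vec n \<and> 0 < al S \<and>
     minv M *\<^sub>v (A *\<^sub>v rr S) = al S \<cdot>\<^sub>v vv S \<and> C *\<^sub>v rr S = al S \<cdot>\<^sub>v tt S"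

lemma cr_g_carrier:
  assumes I: "cr_invariant S"
  shows "cr_ghat A N S \<in> carrier_vec n" "cr_h A N S \<in> carrier_vec (length (qs S))"
    "cr_g A N S \<in> carrier_vec n"
proof -
  have "transpose_mat A *\<^sub>v vv S + tt S \<in> carrier_vec n"
    using I A_carrier unfolding cr_invariant_def by simp
  thus gh: "cr_ghat A N S \<in> carrier_vec n" unfolding cr_ghat_def using minv_N(1) by simp
  have "transpose_mat (Qmat A S) \<in> carrier_mat (length (qs S)) n" unfolding Qmat_eq by simp
  thus "cr_h A N S \<in> carrier_vec (length (qs S))"
    unfolding cr_h_def using N_carrier gh by simp
  hence "Qmat A S *\<^sub>v cr_h A N S \<in> carrier_vec n"
    unfolding Qmat_eq by (intro mult_mat_vec_carrier) simp_all
  thus "cr_g A N S \<in> carrier_vec n" unfolding cr_g_def using gh by simp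
qed

lemma N_cr_ghat:
  assumes "cr_invariant S"
  shows "N *\<^sub>v cr_ghat A N S = transpose_mat A *\<^sub>v vv S + tt S"
  unfolding cr_ghat_def
  using assms A_carrier minv_N(3) unfolding cr_invariant_def by simp

lemma cr_ghat_decomp:
  assumes "cr_invariant S"
  shows "cr_ghat A N S = Qmat A S *\<^sub>v cr_h A N S + cr_g A N S"
  unfolding cr_g_def using cr_g_carrier[OF assms]
  by (intro eq_vecI) (auto simp: Qmat_eq)

lemma cr_g_N_orthogonal:
  assumes I: "cr_invariant S" and a: "a < length (qs S)"
  shows "qs S ! a \<bullet> (N *\<^sub>v cr_g A N S) = 0"
proof -
  define Q where "Q = Qmat A S"
  define h where "h = cr_h A N S"
  have orth: "N_orthonormal (qs S)" using I unfolding cr_invariant_def by simp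
  have Q: "Q \<in> carrier_mat n (length (qs S))" unfolding Q_def Qmat_eq by simp
  note carr = cr_g_carrier[OF I, folded h_def]
  have Qh: "Q *\<^sub>v h \<in> carrier_vec n" using Q carr by simp
  have "transpose_mat Q *\<^sub>v (N *\<^sub>v (Q *\<^sub>v h)) = (transpose_mat Q * (N * Q)) *\<^sub>v h"
    using Q N_carrier carr by (simp add: assoc_mult_mat_vec[of _ "length (qs S)" n _ "length (qs S)"])
  also have "\<dots> = h" using Qmat_orthonormal[OF orth] carr unfolding Q_def by simp
  finally have QNQh: "transpose_mat Q *\<^sub>v (N *\<^sub>v (Q *\<^sub>v h)) = h" .
  have "transpose_mat Q *\<^sub>v (N *\<^sub>v cr_g A N S)
      = transpose_mat Q *\<^sub>v (N *\<^sub>v cr_ghat A N S) - transpose_mat Q *\<^sub>v (N *\<^sub>v (Q *\<^sub>v h))"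
    unfolding cr_g_def Q_def[symmetric] h_def[symmetric] using Q N_carrier carr Qh
    by (simp add: mult_minus_distrib_mat_vec[of N n n]
        mult_minus_distrib_mat_vec[of "transpose_mat Q" "length (qs S)" n])
  also have "\<dots> = 0\<^sub>v (length (qs S))"
    unfolding QNQh using carr unfolding h_def cr_h_def Q_def by simp
  finally have "(transpose_mat Q *\<^sub>v (N *\<^sub>v cr_g A N S)) $ a = 0" using a by simp
  moreover have "qs S ! a \<in> carrier_vec n" using orth a unfolding N_orthonormal_def by auto
  ultimately show ?thesis using Q a N_carrier carr unfolding Q_def Qmat_eq by simp
qed

lemma cr_beta_next_sq:
  assumes "cr_invariant S"
  shows "cr_beta_next A N S ^ 2 = cr_g A N S \<bullet> (N *\<^sub>v cr_g A N S)"
  unfolding cr_beta_next_def Gnorm_def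
  using N_scalar_prod_nonneg[OF cr_g_carrier(3)[OF assms]] by simp

lemma cr_g_eq_zero:
  assumes I: "cr_invariant S" and z: "cr_beta_next A N S = 0"
  shows "cr_g A N S = 0\<^sub>v n"
  using cr_beta_next_sq[OF I] z N_pos_def cr_g_carrier(3)[OF I]
  unfolding pos_def_mat_def by fastforce

lemma cr_invariant_init: "cr_invariant (cr_init M A C N b)"
proof -
  define y where "y = minv N *\<^sub>v b"
  define \<beta> where "\<beta> = Gnorm (minv N) b"
  define q where "q = (1 / \<beta>) \<cdot>\<^sub>v (minv N *\<^sub>v b)"
  define w where "w = minv M *\<^sub>v (A *\<^sub>v q)"
  define \<alpha> where "\<alpha> = sqrt (w \<bullet> (M *\<^sub>v w) + q \<bullet> (C *\<^sub>v q))"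
  note F = cr_init_fields[OF \<beta>_def q_def w_def \<alpha>_def]
  have yc: "y \<in> carrier_vec n" unfolding y_def using minv_N(1) b_carrier by simp
  have Ny: "N *\<^sub>v y = b" unfolding y_def using minv_N(3)[OF b_carrier] .
  have "y \<noteq> 0\<^sub>v n" using Ny b_nonzero N_carrier by auto
  hence pos: "0 < y \<bullet> (N *\<^sub>v y)" using N_pos_def yc unfolding pos_def_mat_def by blast
  have "b \<bullet> y = y \<bullet> (N *\<^sub>v y)" using Ny yc N_carrier by (metis comm_scalar_prod mult_mat_vec_carrier)
  hence \<beta>: "\<beta> = sqrt (y \<bullet> (N *\<^sub>v y))" unfolding \<beta>_def Gnorm_def y_def by simp
  have qy: "q = (1 / \<beta>) \<cdot>\<^sub>v y" unfolding q_def y_def ..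
  have qc: "q \<in> carrier_vec n" using qy yc by simp
  have "q \<bullet> (N *\<^sub>v q) = (1 / \<beta>) * ((1 / \<beta>) * (y \<bullet> (N *\<^sub>v y)))"
    unfolding qy using yc N_carrier by (simp add: mult_mat_vec[OF N_carrier yc])
  also have "\<dots> = 1" using \<beta> pos by (simp add: field_simps)
  finally have qNq: "q \<bullet> (N *\<^sub>v q) = 1" .
  hence "q \<noteq> 0\<^sub>v n" using N_carrier qc by auto
  hence \<alpha>: "0 < \<alpha>" unfolding \<alpha>_def using sqrt_energy_pos[OF qc _ w_def] by blast
  have wc: "w \<in> carrier_vec m" unfolding w_def using minv_M(1) A_carrier qc by simp
  show ?thesis
    unfolding cr_invariant_def N_orthonormal_def in_N_span_def F
    using qc qNq wc \<alpha> C_carrier smult_inverse_cancel[of \<alpha>] by (auto simp: w_def)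
qed

lemma cr_q_next:
  assumes I: "cr_invariant S" and nz: "cr_beta_next A N S \<noteq> 0"
  defines "q \<equiv> (1 / cr_beta_next A N S) \<cdot>\<^sub>v cr_g A N S"
  shows "q \<in> carrier_vec n" "q \<bullet> (N *\<^sub>v q) = 1" "\<forall>a<length (qs S). qs S ! a \<bullet> (N *\<^sub>v q) = 0"
proof -
  define g where "g = cr_g A N S"
  have gc: "g \<in> carrier_vec n" unfolding g_def using cr_g_carrier[OF I] by simp
  have Nq: "N *\<^sub>v q = (1 / cr_beta_next A N S) \<cdot>\<^sub>v (N *\<^sub>v g)"
    unfolding q_def g_def[symmetric] using mult_mat_vec[OF N_carrier gc] .
  show "q \<in> carrier_vec n" unfolding q_def using gc unfolding g_def by simp
  have "q \<bullet> (N *\<^sub>v q) = (1 / cr_beta_next A N S) ^ 2 * (g \<bullet> (N *\<^sub>v g))"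
    unfolding Nq unfolding q_def g_def[symmetric] using gc N_carrier by (simp add: power2_eq_square)
  also have "\<dots> = (1 / cr_beta_next A N S) ^ 2 * cr_beta_next A N S ^ 2"
    using cr_beta_next_sq[OF I] unfolding g_def by simp
  also have "\<dots> = 1" using nz by (simp add: field_simps)
  finally show "q \<bullet> (N *\<^sub>v q) = 1" .
  show "\<forall>a<length (qs S). qs S ! a \<bullet> (N *\<^sub>v q) = 0"
  proof (intro allI impI)
    fix a assume a: "a < length (qs S)"
    hence "qs S ! a \<in> carrier_vec n"
      using I unfolding cr_invariant_def N_orthonormal_def by auto
    thus "qs S ! a \<bullet> (N *\<^sub>v q) = 0"
      unfolding Nq using cr_g_N_orthogonal[OF I a] gc N_carrier unfolding g_def by simp
  qed
qed

lemma cr_invariant_next: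
  assumes I: "cr_invariant S" and nz: "cr_beta_next A N S \<noteq> 0"
  shows "cr_invariant (cr_next M A C N S)"
proof -
  define \<beta> where "\<beta> = cr_beta_next A N S"
  define q where "q = (1 / \<beta>) \<cdot>\<^sub>v cr_g A N S"
  define r where "r = q - (\<beta> / al S) \<cdot>\<^sub>v rr S"
  define w where "w = minv M *\<^sub>v (A *\<^sub>v q) - \<beta> \<cdot>\<^sub>v vv S"
  define \<alpha> where "\<alpha> = sqrt (w \<bullet> (M *\<^sub>v w) + r \<bullet> (C *\<^sub>v r))"
  note F = cr_next_fields[OF \<beta>_def q_def r_def w_def \<alpha>_def]
  have orth: "N_orthonormal (qs S)" and span: "in_N_span (qs S) (rr S)"
    and vc: "vv S \<in> carrier_vec m" and al: "0 < al S"
    and rw: "minv M *\<^sub>v (A *\<^sub>v rr S) = al S \<cdot>\<^sub>v vv S"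
    using I unfolding cr_invariant_def by auto
  have rrc: "rr S \<in> carrier_vec n" using span unfolding in_N_span_def by simp
  note qfacts = cr_q_next[OF I nz, folded \<beta>_def, folded q_def]
  have rc: "r \<in> carrier_vec n" unfolding r_def using qfacts(1) rrc by simp
  have "rr S \<bullet> (N *\<^sub>v q) = 0" using span qfacts unfolding in_N_span_def by blast
  hence "r \<bullet> (N *\<^sub>v q) = 1"
    unfolding r_def using qfacts(1,2) rrc N_carrier by (simp add: minus_scalar_prod_distrib[of _ n])
  hence "r \<noteq> 0\<^sub>v n" using N_carrier qfacts(1) by auto
  moreover have wr: "w = minv M *\<^sub>v (A *\<^sub>v r)"
  proof -
    have "minv M *\<^sub>v (A *\<^sub>v r) = minv M *\<^sub>v (A *\<^sub>v q) - (\<beta> / al S) \<cdot>\<^sub>v (minv M *\<^sub>v (A *\<^sub>v rr S))"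
      unfolding r_def using A_carrier minv_M(1) qfacts(1) rrc
      by (simp add: mult_minus_distrib_mat_vec[of _ m n] mult_minus_distrib_mat_vec[of _ m m]
          mult_mat_vec[of _ m n] mult_mat_vec[of _ m m])
    also have "\<dots> = w" unfolding rw w_def using al by (simp add: smult_smult_assoc)
    finally show ?thesis by simp
  qed
  ultimately have \<alpha>: "0 < \<alpha>" unfolding \<alpha>_def using sqrt_energy_pos[OF rc] by blast
  have wc: "w \<in> carrier_vec m" unfolding wr using minv_M(1) A_carrier rc by simp
  show ?thesis
    unfolding cr_invariant_def F
    using N_orthonormal_snoc[OF orth qfacts]
      in_N_span_snoc[OF span qfacts(1), of "\<beta> / al S", folded r_def]
      wc \<alpha> C_carrier smult_inverse_cancel[of \<alpha>] rc
    by (auto simp: wr)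
qed

lemma length_qs_state: "length (qs (st j)) = Suc j"
  by (induction j) (auto simp: cr_next_def cr_init_def Let_def)

lemma qs_state_take: "i \<le> j \<Longrightarrow> take (Suc i) (qs (st j)) = qs (st i)"
proof (induction j)
  case (Suc j)
  thus ?case
    using length_qs_state[of j] length_qs_state[of "Suc j"]
    by (cases "i = Suc j") (auto simp: cr_next_def Let_def)
qed (use length_qs_state[of 0] in simp)

lemma qs_state_last: "qs (st (Suc i)) ! Suc i = (1 / cr_beta_next A N (st i)) \<cdot>\<^sub>v cr_g A N (st i)"
  using length_qs_state[of i] by (simp add: cr_next_def Let_def nth_append)

lemma cr_invariant_state: "\<forall>i<j. cr_beta_next A N (st i) \<noteq> 0 \<Longrightarrow> cr_invariant (st j)"
  by (induction j) (auto intro: cr_invariant_init cr_invariant_next)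

lemma cr_alpha_pos:
  assumes "\<forall>i<K. cr_beta_next A N (st i) \<noteq> 0"
  shows "0 < cr_alpha M A C N b (Suc K)"
  using cr_invariant_state[OF assms] unfolding cr_alpha_def cr_invariant_def by simp

lemma Qmat_state_carrier: "Qmat A (st K) \<in> carrier_mat n (Suc K)"
  unfolding Qmat_eq using mat_of_cols_carrier(1)[of n "qs (st K)"] length_qs_state[of K] by simp

lemma qs_state_nth:
  assumes "\<forall>i<j. cr_beta_next A N (st i) \<noteq> 0" and "j \<le> K"
  shows "qs (st K) ! j = qs (st j) ! j" "qs (st j) ! j \<in> carrier_vec n"
proof -
  show "qs (st K) ! j = qs (st j) ! j"
    using qs_state_take[OF assms(2)] by (metis lessI nth_take)
  have "N_orthonormal (qs (st j))"
    using cr_invariant_state[OF assms(1)] unfolding cr_invariant_def by simp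
  thus "qs (st j) ! j \<in> carrier_vec n"
    using length_qs_state[of j] unfolding N_orthonormal_def by (simp add: subset_code(1))
qed

lemma col_Qmat_state:
  assumes "\<forall>i<j. cr_beta_next A N (st i) \<noteq> 0" and "j \<le> K"
  shows "col (Qmat A (st K)) j = qs (st j) ! j"
  using qs_state_nth[OF assms] assms(2) length_qs_state[of K]
  unfolding Qmat_eq by (subst col_mat_of_cols) auto

text \<open>
  Column \<open>j\<close> of \<open>M\<^sup>-\<^sup>1 A Q\<^sub>k = V\<^sub>k B\<^sub>k\<close> and of \<open>C Q\<^sub>k = T\<^sub>k B\<^sub>k\<close>, read off from
  \<open>q\<^sub>j = r\<^sub>j + (\<beta>\<^sub>j / \<alpha>\<^sub>j\<^sub>-\<^sub>1) r\<^sub>j\<^sub>-\<^sub>1\<close>.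
\<close>

lemma mult_mat_vec_qs_state:
  assumes nz: "\<forall>i<j. cr_beta_next A N (st i) \<noteq> 0" and X: "X \<in> carrier_mat d n"
    and Xr: "\<And>i. i \<le> j \<Longrightarrow> X *\<^sub>v rr (st i) = al (st i) \<cdot>\<^sub>v y i"
  shows "X *\<^sub>v (qs (st j) ! j) = (if j = 0 then al (st 0) \<cdot>\<^sub>v y 0
           else al (st j) \<cdot>\<^sub>v y j + cr_beta_next A N (st (j - 1)) \<cdot>\<^sub>v y (j - 1))"
proof (cases j)
  case 0
  have "qs (st 0) ! 0 = rr (st 0)" by (simp add: cr_init_def Let_def)
  thus ?thesis using Xr[of 0] 0 by simp
next
  case (Suc i)
  define c where "c = cr_beta_next A N (st i) / al (st i)"
  have I: "cr_invariant (st i)" using nz Suc by (intro cr_invariant_state) auto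
  have rc: "rr (st i) \<in> carrier_vec n" and al: "0 < al (st i)"
    using I unfolding cr_invariant_def in_N_span_def by auto
  have qc: "qs (st j) ! j \<in> carrier_vec n" using qs_state_nth(2)[OF nz order_refl] .
  have "rr (st j) = qs (st j) ! j - c \<cdot>\<^sub>v rr (st i)"
    unfolding Suc qs_state_last by (simp add: c_def cr_next_def Let_def)
  hence r'c: "rr (st j) \<in> carrier_vec n" and qr: "qs (st j) ! j = rr (st j) + c \<cdot>\<^sub>v rr (st i)"
    using qc rc by (auto intro!: eq_vecI)
  have "X *\<^sub>v (qs (st j) ! j) = X *\<^sub>v rr (st j) + c \<cdot>\<^sub>v (X *\<^sub>v rr (st i))"
    unfolding qr using X r'c rc
    by (simp add: mult_add_distrib_mat_vec[of X d n] mult_mat_vec[of X d n])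
  also have "\<dots> = al (st j) \<cdot>\<^sub>v y j + cr_beta_next A N (st i) \<cdot>\<^sub>v y i"
    using Xr[of j] Xr[of i] Suc al by (simp add: c_def smult_smult_assoc)
  finally show ?thesis using Suc by simp
qed

lemma col_mult_cr_B:
  assumes Y: "Y \<in> carrier_mat d k" and j: "j < k"
  shows "col (Y * cr_B M A C N b k) j = (if j = 0 then al (st 0) \<cdot>\<^sub>v col Y 0
           else al (st j) \<cdot>\<^sub>v col Y j + cr_beta_next A N (st (j - 1)) \<cdot>\<^sub>v col Y (j - 1))"
proof -
  have B: "cr_B M A C N b k \<in> carrier_mat k k" unfolding cr_B_def by simp
  have Ye: "Y *\<^sub>v (c \<cdot>\<^sub>v unit_vec k i) = c \<cdot>\<^sub>v col Y i" if "i < k" for c i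
    using mult_mat_vec[OF Y unit_vec_carrier] mult_mat_vec_unit_vec[OF Y that] by simp
  show ?thesis
  proof (cases j)
    case 0
    have "col (cr_B M A C N b k) j = al (st 0) \<cdot>\<^sub>v unit_vec k 0"
      using j unfolding 0 cr_B_def cr_alpha_def by (auto intro!: eq_vecI simp: unit_vec_def)
    hence "col (Y * cr_B M A C N b k) j = al (st 0) \<cdot>\<^sub>v col Y 0"
      using col_mult2[OF Y B j] Ye[of 0] j by simp
    thus ?thesis using 0 by simp
  next
    case (Suc i)
    have "col (cr_B M A C N b k) j
        = al (st j) \<cdot>\<^sub>v unit_vec k j + cr_beta_next A N (st i) \<cdot>\<^sub>v unit_vec k i"
      using j unfolding Suc cr_B_def cr_alpha_def by (auto intro!: eq_vecI simp: unit_vec_def)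
    hence "col (Y * cr_B M A C N b k) j
        = Y *\<^sub>v (al (st j) \<cdot>\<^sub>v unit_vec k j) + Y *\<^sub>v (cr_beta_next A N (st i) \<cdot>\<^sub>v unit_vec k i)"
      using col_mult2[OF Y B j] mult_add_distrib_mat_vec[OF Y] by simp
    also have "\<dots> = al (st j) \<cdot>\<^sub>v col Y j + cr_beta_next A N (st i) \<cdot>\<^sub>v col Y i"
      using Ye j Suc by simp
    finally show ?thesis using Suc by simp
  qed
qed

lemma mult_Qmat_state:
  assumes nz: "\<forall>i<K. cr_beta_next A N (st i) \<noteq> 0"
    and X: "X \<in> carrier_mat d n" and Y: "Y \<in> carrier_mat d (Suc K)"
    and XY: "\<And>i. i \<le> K \<Longrightarrow> X *\<^sub>v rr (st i) = al (st i) \<cdot>\<^sub>v col Y i"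
  shows "X * Qmat A (st K) = Y * cr_B M A C N b (Suc K)"
proof (rule mat_col_eqI)
  fix j assume "j < dim_col (Y * cr_B M A C N b (Suc K))"
  hence j: "j \<le> K" unfolding cr_B_def by simp
  have nz_j: "\<forall>i<j. cr_beta_next A N (st i) \<noteq> 0" using nz j by simp
  have XY_j: "\<And>i. i \<le> j \<Longrightarrow> X *\<^sub>v rr (st i) = al (st i) \<cdot>\<^sub>v col Y i" using XY j by simp
  have "col (X * Qmat A (st K)) j = X *\<^sub>v (qs (st j) ! j)"
    using col_mult2[OF X Qmat_state_carrier, of j] col_Qmat_state[OF nz_j j] j by simp
  also have "\<dots> = col (Y * cr_B M A C N b (Suc K)) j"
    using mult_mat_vec_qs_state[OF nz_j X XY_j] col_mult_cr_B[OF Y, of j] j by simp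
  finally show "col (X * Qmat A (st K)) j = col (Y * cr_B M A C N b (Suc K)) j" .
qed (use X Y Qmat_state_carrier in \<open>auto simp: cr_B_def\<close>)

lemma col_cr_H:
  assumes "j < k"
  shows "col (cr_H M A C N b k) j
       = vec k (\<lambda>i. if i < Suc j then cr_h A N (st j) $ i else 0)
         + cr_beta_next A N (st j) \<cdot>\<^sub>v unit_vec k (Suc j)"
  using assms unfolding cr_H_def cr_hk_def
  by (intro eq_vecI) (auto simp: numeral_2_eq_2 unit_vec_def)

lemma Qmat_mult_col_cr_H:
  assumes nz: "\<forall>i<K. cr_beta_next A N (st i) \<noteq> 0" and last: "cr_beta_next A N (st K) = 0"
    and j: "j \<le> K"
  shows "Qmat A (st K) *\<^sub>v col (cr_H M A C N b (Suc K)) j = cr_ghat A N (st j)"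
proof -
  define k where "k = Suc K"
  define Q where "Q = Qmat A (st K)"
  define h where "h = cr_h A N (st j)"
  define \<beta> where "\<beta> = cr_beta_next A N (st j)"
  define pad where "pad = vec k (\<lambda>i. if i < Suc j then h $ i else 0)"
  have I: "cr_invariant (st j)" using nz j by (intro cr_invariant_state) auto
  have IK: "cr_invariant (st K)" using cr_invariant_state[OF nz] .
  have Q: "Q \<in> carrier_mat n k" unfolding Q_def k_def by (rule Qmat_state_carrier)
  have hc: "h \<in> carrier_vec (Suc j)"
    using cr_g_carrier(2)[OF I] length_qs_state[of j] unfolding h_def by simp
  have colH: "col (cr_H M A C N b k) j = pad + \<beta> \<cdot>\<^sub>v unit_vec k (Suc j)"
    unfolding pad_def h_def \<beta>_def using j k_def by (intro col_cr_H) simp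
  have "set (qs (st K)) \<subseteq> carrier_vec n"
    using IK unfolding cr_invariant_def N_orthonormal_def by simp
  hence Qpad: "Q *\<^sub>v pad = Qmat A (st j) *\<^sub>v h"
    using mat_of_cols_take_mult_vec[of "qs (st K)" n "Suc j" h] qs_state_take[OF j] hc j
    unfolding Q_def Qmat_eq pad_def k_def length_qs_state by simp
  have Qunit: "\<beta> \<cdot>\<^sub>v (Q *\<^sub>v unit_vec k (Suc j)) = cr_g A N (st j)"
  proof (cases "j = K")
    case True
    hence "\<beta> = 0" "cr_g A N (st j) = 0\<^sub>v n" using last cr_g_eq_zero[OF I] unfolding \<beta>_def by auto
    thus ?thesis using Q by (auto intro!: eq_vecI)
  next
    case False
    hence "Suc j < k" "\<beta> \<noteq> 0" using j nz unfolding k_def \<beta>_def by auto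
    moreover have "\<forall>i<Suc j. cr_beta_next A N (st i) \<noteq> 0" using nz j False by auto
    ultimately have "Q *\<^sub>v unit_vec k (Suc j) = (1 / \<beta>) \<cdot>\<^sub>v cr_g A N (st j)"
      using mult_mat_vec_unit_vec[OF Q] col_Qmat_state[of "Suc j" K] j False
      unfolding Q_def qs_state_last \<beta>_def by simp
    thus ?thesis using smult_inverse_cancel[OF \<open>\<beta> \<noteq> 0\<close>] by simp
  qed
  have "Q *\<^sub>v col (cr_H M A C N b k) j = Q *\<^sub>v pad + \<beta> \<cdot>\<^sub>v (Q *\<^sub>v unit_vec k (Suc j))"
    unfolding colH pad_def using Q
    by (simp add: mult_add_distrib_mat_vec[of Q n k] mult_mat_vec[of Q n k])
  also have "\<dots> = cr_ghat A N (st j)"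
    unfolding Qpad Qunit h_def using cr_ghat_decomp[OF I] by simp
  finally show ?thesis unfolding Q_def k_def .
qed

definition Vmat :: "nat \<Rightarrow> real mat" where
  "Vmat k = mat_of_cols m (map (\<lambda>i. vv (st i)) [0..<k])"

definition Tmat :: "nat \<Rightarrow> real mat" where
  "Tmat k = mat_of_cols n (map (\<lambda>i. tt (st i)) [0..<k])"

lemma Vmat_Tmat_carrier: "Vmat k \<in> carrier_mat m k" "Tmat k \<in> carrier_mat n k"
  unfolding Vmat_def Tmat_def by (rule mat_of_cols_map_upt_carrier)+

lemma col_Vmat_Tmat:
  assumes "\<forall>i<K. cr_beta_next A N (st i) \<noteq> 0" and "j \<le> K"
  shows "col (Vmat (Suc K)) j = vv (st j)" "col (Tmat (Suc K)) j = tt (st j)"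
proof -
  have "cr_invariant (st j)" using assms by (intro cr_invariant_state) auto
  hence "vv (st j) \<in> carrier_vec m" "tt (st j) \<in> carrier_vec n"
    unfolding cr_invariant_def by auto
  thus "col (Vmat (Suc K)) j = vv (st j)" "col (Tmat (Suc K)) j = tt (st j)"
    unfolding Vmat_def Tmat_def using assms(2) by (intro col_mat_of_cols_map_upt; simp)+
qed

lemma N_Qmat_cr_H:
  assumes nz: "\<forall>i<K. cr_beta_next A N (st i) \<noteq> 0" and last: "cr_beta_next A N (st K) = 0"
  shows "N * Qmat A (st K) * cr_H M A C N b (Suc K) = transpose_mat A * Vmat (Suc K) + Tmat (Suc K)"
proof (rule mat_col_eqI)
  note V = Vmat_Tmat_carrier(1)[of "Suc K"] and T = Vmat_Tmat_carrier(2)[of "Suc K"]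
  have H: "cr_H M A C N b (Suc K) \<in> carrier_mat (Suc K) (Suc K)" unfolding cr_H_def by simp
  have NQ: "N * Qmat A (st K) \<in> carrier_mat n (Suc K)" using N_carrier Qmat_state_carrier by simp
  have AT: "transpose_mat A \<in> carrier_mat n m" using A_carrier by simp
  fix j assume "j < dim_col (transpose_mat A * Vmat (Suc K) + Tmat (Suc K))"
  hence j: "j \<le> K" using T by simp
  have I: "cr_invariant (st j)" using nz j by (intro cr_invariant_state) auto
  have cH: "col (cr_H M A C N b (Suc K)) j \<in> carrier_vec (Suc K)"
    using H unfolding carrier_vec_def by simp
  have "col (N * Qmat A (st K) * cr_H M A C N b (Suc K)) j
      = (N * Qmat A (st K)) *\<^sub>v col (cr_H M A C N b (Suc K)) j"
    using col_mult2[OF NQ H] j by simp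
  also have "\<dots> = N *\<^sub>v (Qmat A (st K) *\<^sub>v col (cr_H M A C N b (Suc K)) j)"
    by (rule assoc_mult_mat_vec[OF N_carrier Qmat_state_carrier cH])
  also have "\<dots> = transpose_mat A *\<^sub>v vv (st j) + tt (st j)"
    unfolding Qmat_mult_col_cr_H[OF nz last j] N_cr_ghat[OF I] ..
  also have "\<dots> = col (transpose_mat A * Vmat (Suc K) + Tmat (Suc K)) j"
    using col_add[OF mult_carrier_mat[OF AT V] T, of j] col_mult2[OF AT V, of j] j
      col_Vmat_Tmat[OF nz j] by simp
  finally show "col (N * Qmat A (st K) * cr_H M A C N b (Suc K)) j
      = col (transpose_mat A * Vmat (Suc K) + Tmat (Suc K)) j" .
qed (use N_carrier Qmat_state_carrier[of K] Vmat_Tmat_carrier(2)[of "Suc K"]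
    in \<open>simp_all add: cr_H_def carrier_matD\<close>)

lemma schur_Qmat_factorization:
  assumes nz: "\<forall>i<K. cr_beta_next A N (st i) \<noteq> 0" and last: "cr_beta_next A N (st K) = 0"
  shows "schur_mat M A C * Qmat A (st K)
       = N * Qmat A (st K) * cr_H M A C N b (Suc K) * cr_B M A C N b (Suc K)"
proof -
  define Q where "Q = Qmat A (st K)"
  define B where "B = cr_B M A C N b (Suc K)"
  define V where "V = Vmat (Suc K)"
  define T where "T = Tmat (Suc K)"
  have Q: "Q \<in> carrier_mat n (Suc K)" unfolding Q_def by (rule Qmat_state_carrier)
  have B: "B \<in> carrier_mat (Suc K) (Suc K)" unfolding B_def cr_B_def by simp
  have V: "V \<in> carrier_mat m (Suc K)" and T: "T \<in> carrier_mat n (Suc K)"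
    unfolding V_def T_def by (rule Vmat_Tmat_carrier)+
  have AT: "transpose_mat A \<in> carrier_mat n m" using A_carrier by simp
  have MA: "minv M * A \<in> carrier_mat m n" using minv_M(1) A_carrier by simp
  have I: "cr_invariant (st i)" if "i \<le> K" for i using nz that by (intro cr_invariant_state) auto
  have VB: "(minv M * A) * Q = V * B"
    unfolding Q_def V_def B_def
  proof (rule mult_Qmat_state[OF nz MA Vmat_Tmat_carrier(1)])
    fix i assume "i \<le> K"
    thus "(minv M * A) *\<^sub>v rr (st i) = al (st i) \<cdot>\<^sub>v col (Vmat (Suc K)) i"
      using I minv_M(1) A_carrier col_Vmat_Tmat(1)[OF nz]
      unfolding cr_invariant_def in_N_span_def by auto
  qed
  have TB: "C * Q = T * B"
    unfolding Q_def T_def B_def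
  proof (rule mult_Qmat_state[OF nz C_carrier Vmat_Tmat_carrier(2)])
    fix i assume "i \<le> K"
    thus "C *\<^sub>v rr (st i) = al (st i) \<cdot>\<^sub>v col (Tmat (Suc K)) i"
      using I col_Vmat_Tmat(2)[OF nz] unfolding cr_invariant_def by auto
  qed
  have "schur_mat M A C * Q = transpose_mat A * minv M * A * Q + C * Q"
    unfolding schur_mat_def using AT minv_M(1) A_carrier C_carrier Q
    by (intro add_mult_distrib_mat) auto
  also have "transpose_mat A * minv M * A = transpose_mat A * (minv M * A)"
    using AT minv_M(1) A_carrier by (rule assoc_mult_mat)
  also have "\<dots> * Q = transpose_mat A * ((minv M * A) * Q)"
    using AT MA Q by (rule assoc_mult_mat)
  finally have "schur_mat M A C * Q = transpose_mat A * (V * B) + T * B"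
    using VB TB by simp
  also have "transpose_mat A * (V * B) = transpose_mat A * V * B"
    using AT V B by (rule assoc_mult_mat[symmetric])
  also have "transpose_mat A * V * B + T * B = (transpose_mat A * V + T) * B"
    using AT V T B by (intro add_mult_distrib_mat[symmetric]) auto
  also have "transpose_mat A * V + T = N * Q * cr_H M A C N b (Suc K)"
    unfolding Q_def V_def T_def using N_Qmat_cr_H[OF nz last] by simp
  finally show ?thesis unfolding Q_def B_def .
qed

lemma det_cr_B_nonzero:
  assumes pos: "\<And>i. i < k \<Longrightarrow> 0 < al (st i)"
  shows "det (cr_B M A C N b k) \<noteq> 0"
proof -
  have B: "cr_B M A C N b k \<in> carrier_mat k k" unfolding cr_B_def by simp
  have "upper_triangular (cr_B M A C N b k)" unfolding upper_triangular_def cr_B_def by auto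
  hence "det (cr_B M A C N b k) = prod_list (diag_mat (cr_B M A C N b k))"
    using B by (rule det_upper_triangular)
  moreover have "0 \<notin> set (diag_mat (cr_B M A C N b k))"
  proof
    assume "0 \<in> set (diag_mat (cr_B M A C N b k))"
    then obtain i where "i < k" "cr_B M A C N b k $$ (i, i) = 0"
      unfolding diag_mat_def cr_B_def by auto
    thus False using pos unfolding cr_B_def cr_alpha_def by fastforce
  qed
  ultimately show ?thesis by (simp add: prod_list_zero_iff)
qed

lemma N_Qmat_first_col:
  "N *\<^sub>v (Qmat A (st K) *\<^sub>v (cr_beta M A C N b 1 \<cdot>\<^sub>v unit_vec (Suc K) 0)) = b"
proof -
  define \<beta>1 where "\<beta>1 = cr_beta M A C N b 1"
  have Nib: "minv N *\<^sub>v b \<in> carrier_vec n" using minv_N(1) b_carrier by simp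
  have q0: "qs (st 0) ! 0 = (1 / \<beta>1) \<cdot>\<^sub>v (minv N *\<^sub>v b)"
    unfolding \<beta>1_def by (simp add: cr_init_def Let_def)
  have "\<beta>1 \<noteq> 0"
  proof
    assume "\<beta>1 = 0"
    hence "qs (st 0) ! 0 = 0\<^sub>v n" unfolding q0 using Nib minv_N(1) by (auto intro!: eq_vecI)
    moreover have "N_orthonormal (qs (st 0))"
      using cr_invariant_init unfolding cr_invariant_def by simp
    hence "qs (st 0) ! 0 \<bullet> (N *\<^sub>v (qs (st 0) ! 0)) = 1"
      using length_qs_state[of 0] unfolding N_orthonormal_def by simp
    ultimately show False using N_carrier by simp
  qed
  have "Qmat A (st K) *\<^sub>v (\<beta>1 \<cdot>\<^sub>v unit_vec (Suc K) 0) = \<beta>1 \<cdot>\<^sub>v col (Qmat A (st K)) 0"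
    using mult_mat_vec[OF Qmat_state_carrier unit_vec_carrier]
      mult_mat_vec_unit_vec[OF Qmat_state_carrier] by simp
  also have "\<dots> = minv N *\<^sub>v b"
    using col_Qmat_state[of 0 K] \<open>\<beta>1 \<noteq> 0\<close> unfolding q0 by (simp add: smult_inverse_cancel)
  finally show ?thesis using minv_N(3)[OF b_carrier] unfolding \<beta>1_def by simp
qed

lemma cr_iterates_exact:
  assumes nz: "\<forall>i<K. cr_beta_next A N (st i) \<noteq> 0" and last: "cr_beta_next A N (st K) = 0"
    and us: "u_star \<in> carrier_vec m" and ps: "p_star \<in> carrier_vec n"
    and eq1: "M *\<^sub>v u_star + A *\<^sub>v p_star = 0\<^sub>v m"
    and eq2: "transpose_mat A *\<^sub>v u_star - C *\<^sub>v p_star = b"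
  shows "cr_p M A C N b (Suc K) = p_star" "cr_u M A C N b (Suc K) = u_star"
proof -
  define S where "S = schur_mat M A C"
  define Q where "Q = Qmat A (st K)"
  note sol = saddle_point_solution[OF M_pos_def A_carrier C_carrier us ps eq1 eq2, folded S_def]
  have S_pd: "pos_def_mat n S" unfolding S_def using schur_mat_pos_def M_pos_def A_carrier A_rank C_psd .
  hence S: "S \<in> carrier_mat n n" unfolding pos_def_mat_def by simp
  have Q: "Q \<in> carrier_mat n (Suc K)" unfolding Q_def by (rule Qmat_state_carrier)
  have B_pos: "0 < al (st i)" if "i < Suc K" for i
    using cr_invariant_state[of i] nz that unfolding cr_invariant_def by simp
  have orth: "transpose_mat Q * (N * Q) = 1\<^sub>m (Suc K)"
    using Qmat_orthonormal cr_invariant_state[OF nz] length_qs_state[of K]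
    unfolding Q_def cr_invariant_def by simp
  have "S *\<^sub>v cr_p M A C N b (Suc K)
      = - (N *\<^sub>v (Q *\<^sub>v (cr_beta M A C N b 1 \<cdot>\<^sub>v unit_vec (Suc K) 0)))"
    unfolding cr_p_def cr_y_def Q_def[symmetric] diff_Suc_1
    by (rule projected_system_solution[OF S pos_def_mat_mult_vec_eq_zero[OF S_pd] N_carrier Q orth
          _ _ det_cr_B_nonzero[OF B_pos] schur_Qmat_factorization[OF nz last, folded S_def Q_def]])
      (auto simp: cr_H_def cr_B_def)
  also have "\<dots> = S *\<^sub>v p_star" unfolding Q_def N_Qmat_first_col sol(2) ..
  finally have "S *\<^sub>v cr_p M A C N b (Suc K) = S *\<^sub>v p_star" .
  moreover have "cr_p M A C N b (Suc K) \<in> carrier_vec n"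
    unfolding cr_p_def carrier_vec_def using Qmat_state_carrier[of K] by simp
  ultimately show p: "cr_p M A C N b (Suc K) = p_star"
    using pos_def_mat_mult_vec_inj[OF S_pd _ ps] by blast
  show "cr_u M A C N b (Suc K) = u_star" unfolding cr_u_def p sol(1) ..
qed

end

theorem mainTheorem9:
  fixes m n :: nat and M A C N :: "real mat" and b u_star p_star :: "real vec"
  assumes M: "pos_def_mat m M"
    and A: "A \<in> carrier_mat m n" and nm: "n \<le> m"
    and Arank: "vec_space.rank m A = n"
    and C: "psd_mat n C" and Csym: "transpose_mat C = C"
    and b: "b \<in> carrier_vec n" and b0: "b \<noteq> 0\<^sub>v n"
    and N: "pos_def_mat n N" and Nsym: "transpose_mat N = N"
    and us: "u_star \<in> carrier_vec m" and ps: "p_star \<in> carrier_vec n"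
    and eq1: "M *\<^sub>v u_star + A *\<^sub>v p_star = 0\<^sub>v m"
    and eq2: "transpose_mat A *\<^sub>v u_star - C *\<^sub>v p_star = b"
  shows "(\<forall>k \<ge> 1. (\<forall>j. 1 \<le> j \<and> j < k \<longrightarrow> cr_beta M A C N b (j + 1) \<noteq> 0)
             \<longrightarrow> cr_alpha M A C N b k > 0)
       \<and> (\<forall>k \<ge> 1. (\<forall>j. 1 \<le> j \<and> j < k \<longrightarrow> cr_beta M A C N b (j + 1) \<noteq> 0)
             \<and> cr_beta M A C N b (k + 1) = 0
             \<longrightarrow> cr_u M A C N b k = u_star \<and> cr_p M A C N b k = p_star)"
proof -
  interpret ns_craig m n M A C N b
    using M A Arank C N Nsym b b0 by unfold_locales
  show ?thesis
  proof (intro conjI allI impI)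
    fix k :: nat assume k: "1 \<le> k"
      and nz: "\<forall>j. 1 \<le> j \<and> j < k \<longrightarrow> cr_beta M A C N b (j + 1) \<noteq> 0"
    obtain K where "k = Suc K" using k by (cases k) auto
    thus "0 < cr_alpha M A C N b k" using nz cr_beta_nonzero_upto_iff cr_alpha_pos by simp
  next
    fix k :: nat assume k: "1 \<le> k"
      and nz: "(\<forall>j. 1 \<le> j \<and> j < k \<longrightarrow> cr_beta M A C N b (j + 1) \<noteq> 0)
        \<and> cr_beta M A C N b (k + 1) = 0"
    obtain K where "k = Suc K" using k by (cases k) auto
    thus "cr_u M A C N b k = u_star" "cr_p M A C N b k = p_star"
      using nz cr_beta_nonzero_upto_iff cr_iterates_exact[OF _ _ us ps eq1 eq2] by simp_all
  qed
qed

end
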